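(* Let $d\ge 2$, let $B^d$ be the closed unit ball in $\mathbb{E}^d$ centred at the origin with boundary sphere $\mathbb{S}^{d-1}$, and let $K_c=\operatorname{conv}\big(\mathbb{S}^{d-1}\cup\{\boldsymbol v_i\mid i\in I\}\big)$ be a cap body, i.e. $\{\boldsymbol v_i\mid i\in I\}$ is a countable set of points of $\mathbb{E}^d\setminus B^d$ such that for any two distinct $i,j\in I$ the segment $\overline{\boldsymbol v_i\boldsymbol v_j}$ intersects $B^d$. Let $\boldsymbol u_1,\dots,\boldsymbol u_k\in\mathbb{S}^{d-1}$. Then $K_c$ is completely illuminated by the directions $\boldsymbol u_1,\dots,\boldsymbol u_k$ if and only if both of the following hold: (i) for every $i\in I$ the closed spherical cap $C_i=\{\boldsymbol x\in\mathbb{S}^{d-1}\mid \langle \boldsymbol x,\boldsymbol v_i\rangle\ge 1\}$ is contained in the open hemisphere $\operatorname{Hem}_{-\boldsymbol u_j}$ for some $j\in\{1,\dots,k\}$; and (ii) $\bigcup_{j=1}^k \operatorname{Hem}_{-\boldsymbol u_j}=\mathbb{S}^{d-1}$.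
   Context: For a unit vector $\boldsymbol u$, $\operatorname{Hem}_{\boldsymbol u}=\{\boldsymbol x\in\mathbb{S}^{d-1}\mid\langle\boldsymbol x,\boldsymbol u\rangle>0\}$ is the open hemisphere centred at $\boldsymbol u$. For a convex body $K$ (compact convex set with nonempty interior), a direction $\boldsymbol u\in\mathbb{S}^{d-1}$ illuminates a boundary point $\boldsymbol p$ of $K$ if there is $\lambda>0$ with $\boldsymbol p+\lambda\boldsymbol u$ in the interior of $K$; $K$ is completely illuminated by a set of directions if every boundary point of $K$ is illuminated by at least one of them. *)

theory Defs
  imports "HOL-Analysis.Analysis"
begin

definition Hem :: "'a::euclidean_space \<Rightarrow> 'a set" where
  "Hem u = {x \<in> sphere 0 1. x \<bullet> u > 0}"

definition illuminates :: "'a::euclidean_space set \<Rightarrow> 'a \<Rightarrow> 'a \<Rightarrow> bool" where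
  "illuminates K u p \<longleftrightarrow> (\<exists>t>0. p + t *\<^sub>R u \<in> interior K)"

definition completely_illuminated :: "'a::euclidean_space set \<Rightarrow> 'a set \<Rightarrow> bool" where
  "completely_illuminated K U \<longleftrightarrow> (\<forall>p \<in> frontier K. \<exists>u \<in> U. illuminates K u p)"

definition cap_body_vertices :: "'a::euclidean_space set \<Rightarrow> bool" where
  "cap_body_vertices V \<longleftrightarrow> countable V \<and> (\<forall>v \<in> V. v \<notin> cball 0 1) \<and>
     (\<forall>v \<in> V. \<forall>w \<in> V. v \<noteq> w \<longrightarrow> closed_segment v w \<inter> cball 0 1 \<noteq> {})"

definition spherical_cap :: "'a::euclidean_space \<Rightarrow> 'a set" where
  "spherical_cap v = {x \<in> sphere 0 1. x \<bullet> v \<ge> 1}"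

end

theory Submission
  imports Defs
begin

(* Any two vertices are joined by a segment through the unit ball B, so a triangle spanned by
   two vertices and a point of B splits along that segment into two triangles, each lying in
   the cone conv({v} \<union> B) over one vertex; hence the cap body is B together with these cones.
   The same segment condition leaves at most two vertices outside radius 2, so the body is
   compact and contains its boundary.

   If the cap C_v lies in Hem(-u), the ray from v in direction u enters the open ball, and
   then so does the ray from every point of the cone over v outside B; points of the sphere
   in Hem(-u) are illuminated by u directly. Conversely, every c in C_v yields the supporting
   halfspace {y. c \<bullet> y \<le> c \<bullet> v} at the vertex v, and every unit x outside all caps the
   supporting halfspace {y. x \<bullet> y \<le> 1} at x; a direction illuminating the supported point
   must have negative inner product with the normal. *)

lemma norm_diff_inner_scaleR_sq:
  fixes u v :: "'a::real_inner"
  assumes "norm u = 1"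
  shows "(norm (v - (u \<bullet> v) *\<^sub>R u))\<^sup>2 = (norm v)\<^sup>2 - (u \<bullet> v)\<^sup>2"
proof -
  have "u \<bullet> u = 1"
    using assms by (simp add: power2_norm_eq_inner[symmetric])
  then show ?thesis
    unfolding power2_norm_eq_inner
    by (simp add: inner_diff_left inner_diff_right inner_commute power2_eq_square)
qed

lemma sgn_inner_self: "sgn x \<bullet> x = norm (x::'a::real_inner)"
  by (cases "x = 0") (simp_all add: sgn_div_norm dot_square_norm power2_eq_square)

lemma sgn_mem_spherical_cap:
  fixes v :: "'a::euclidean_space"
  assumes "1 \<le> norm v"
  shows "sgn v \<in> spherical_cap v"
  using assms sgn_inner_self[of v] by (auto simp: spherical_cap_def norm_sgn)

lemma exists_add_scaleR_in_ball:
  fixes u v :: "'a::real_inner"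
  assumes "norm u = 1" "u \<bullet> v < 0" "(norm v)\<^sup>2 - (u \<bullet> v)\<^sup>2 < 1"
  shows "\<exists>l>0. v + l *\<^sub>R u \<in> ball 0 1"
proof (intro exI conjI)
  show "- (u \<bullet> v) > 0"
    using assms(2) by simp
  have "(norm (v + (- (u \<bullet> v)) *\<^sub>R u))\<^sup>2 < 1\<^sup>2"
    using norm_diff_inner_scaleR_sq[OF assms(1), of v] assms(3) by simp
  then show "v + (- (u \<bullet> v)) *\<^sub>R u \<in> ball 0 1"
    by (simp add: power_less_imp_less_base)
qed

text \<open>The two ways of failing to enter the ball are witnessed by the centre \<open>sgn v\<close> of
  the cap and by the unit vector in the direction of the component of \<open>v\<close> orthogonal to \<open>u\<close>.\<close>
lemma exists_add_scaleR_in_ball_if_spherical_cap_subset: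
  fixes u v :: "'a::euclidean_space"
  assumes "1 \<le> norm v" "norm u = 1" and cap: "spherical_cap v \<subseteq> Hem (- u)"
  shows "\<exists>l>0. v + l *\<^sub>R u \<in> ball 0 1"
proof (rule exists_add_scaleR_in_ball[OF assms(2)])
  have "v \<noteq> 0"
    using assms(1) by auto
  have "sgn v \<bullet> u < 0"
    using sgn_mem_spherical_cap[OF assms(1)] cap by (auto simp: Hem_def)
  then show "u \<bullet> v < 0"
    using \<open>v \<noteq> 0\<close> by (simp add: sgn_div_norm inner_commute mult_less_0_iff)
  define p where "p = v - (u \<bullet> v) *\<^sub>R u"
  have p2: "(norm p)\<^sup>2 = (norm v)\<^sup>2 - (u \<bullet> v)\<^sup>2"
    unfolding p_def by (rule norm_diff_inner_scaleR_sq[OF assms(2)])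
  show "(norm v)\<^sup>2 - (u \<bullet> v)\<^sup>2 < 1"
  proof (rule ccontr)
    assume "\<not> ?thesis"
    then have p1: "1 \<le> norm p"
      using p2 abs_le_square_iff[of 1 "norm p"] by simp
    have "u \<bullet> u = 1"
      using assms(2) by (simp add: power2_norm_eq_inner[symmetric])
    then have "sgn p \<bullet> u = 0"
      by (simp add: p_def sgn_div_norm inner_diff_left inner_diff_right inner_commute)
    have "sgn p \<bullet> v = sgn p \<bullet> (p + (u \<bullet> v) *\<^sub>R u)"
      by (simp add: p_def)
    also have "\<dots> = norm p"
      using \<open>sgn p \<bullet> u = 0\<close> by (simp add: inner_add_right sgn_inner_self)
    finally have "sgn p \<in> spherical_cap v"
      using p1 by (auto simp: spherical_cap_def norm_sgn)
    with \<open>sgn p \<bullet> u = 0\<close> show False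
      using cap by (auto simp: Hem_def)
  qed
qed

abbreviation ball_cone :: "'a::euclidean_space \<Rightarrow> 'a set" where
  "ball_cone v \<equiv> convex hull (insert v (cball 0 1))"

lemma ball_cone_enters_ball:
  fixes p v u :: "'a::euclidean_space"
  assumes "p \<in> ball_cone v" "p \<notin> cball 0 1" "0 < l" "v + l *\<^sub>R u \<in> ball 0 1"
  shows "\<exists>t>0. p + t *\<^sub>R u \<in> ball 0 1"
proof -
  obtain y where y: "y \<in> cball 0 1" "p \<in> closed_segment v y"
    using assms(1) by (auto simp: convex_hull_insert_segments hull_same[of convex, OF convex_cball])
  then obtain s where s: "0 \<le> s" "s \<le> 1" "p = (1 - s) *\<^sub>R v + s *\<^sub>R y"
    by (auto simp: in_segment)
  have "s \<noteq> 1"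
    using s(3) y(1) assms(2) by auto
  then have a: "0 < 1 - s"
    using s(2) by simp
  have "p + ((1 - s) * l) *\<^sub>R u = (1 - s) *\<^sub>R (v + l *\<^sub>R u) + s *\<^sub>R y"
    by (simp add: s(3) algebra_simps)
  also have "norm \<dots> \<le> (1 - s) * norm (v + l *\<^sub>R u) + s * norm y"
    using a s(1) by (metis abs_of_nonneg less_imp_le norm_scaleR norm_triangle_ineq)
  also have "\<dots> < (1 - s) * 1 + s * 1"
    using a s(1) y(1) assms(4) by (intro add_less_le_mono mult_strict_left_mono mult_left_mono) auto
  finally show ?thesis
    using a assms(3) by (intro exI[of _ "(1 - s) * l"]) auto
qed

lemma mem_convex_hull_3_cevian:
  fixes v w b :: "'a::real_vector"
  assumes q: "q = (1 - t) *\<^sub>R v + t *\<^sub>R w" and "0 < t"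
    and "0 \<le> \<alpha>" "0 \<le> \<beta>" "0 \<le> \<gamma>" "\<alpha> + \<beta> + \<gamma> = 1" "\<beta> * (1 - t) \<le> \<alpha> * t"
  shows "\<alpha> *\<^sub>R v + \<beta> *\<^sub>R w + \<gamma> *\<^sub>R b \<in> convex hull {v, q, b}"
proof -
  have "\<alpha> *\<^sub>R v + \<beta> *\<^sub>R w + \<gamma> *\<^sub>R b = (\<alpha> - \<beta> * (1 - t) / t) *\<^sub>R v + (\<beta> / t) *\<^sub>R q + \<gamma> *\<^sub>R b"
    using \<open>0 < t\<close> by (simp add: q algebra_simps diff_divide_distrib)
  moreover have "0 \<le> \<alpha> - \<beta> * (1 - t) / t"
    using assms(2,7) by (simp add: field_simps)
  moreover have "(\<alpha> - \<beta> * (1 - t) / t) + \<beta> / t + \<gamma> = \<alpha> + \<beta> + \<gamma>"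
    using \<open>0 < t\<close> by (simp add: field_simps)
  ultimately show ?thesis
    using assms(2-6) unfolding convex_hull_3 by force
qed

lemma convex_hull_3_subset_cevian_split:
  fixes v w b :: "'a::real_vector"
  assumes q: "q = (1 - t) *\<^sub>R v + t *\<^sub>R w" and "0 < t" "t < 1"
  shows "convex hull {v, w, b} \<subseteq> convex hull {v, q, b} \<union> convex hull {q, w, b}"
proof
  fix x assume "x \<in> convex hull {v, w, b}"
  then obtain \<alpha> \<beta> \<gamma> where abc: "0 \<le> \<alpha>" "0 \<le> \<beta>" "0 \<le> \<gamma>" "\<alpha> + \<beta> + \<gamma> = 1"
    and x: "x = \<alpha> *\<^sub>R v + \<beta> *\<^sub>R w + \<gamma> *\<^sub>R b"
    unfolding convex_hull_3 by blast
  show "x \<in> convex hull {v, q, b} \<union> convex hull {q, w, b}"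
  proof (cases "\<beta> * (1 - t) \<le> \<alpha> * t")
    case True
    then show ?thesis
      using mem_convex_hull_3_cevian[OF q \<open>0 < t\<close> abc] x by blast
  next
    case False
    have q': "q = (1 - (1 - t)) *\<^sub>R w + (1 - t) *\<^sub>R v"
      by (simp add: q)
    have "\<beta> *\<^sub>R w + \<alpha> *\<^sub>R v + \<gamma> *\<^sub>R b \<in> convex hull {w, q, b}"
      by (rule mem_convex_hull_3_cevian[OF q']) (use abc False \<open>t < 1\<close> in auto)
    then show ?thesis
      by (simp add: x insert_commute add.commute)
  qed
qed

lemma cap_body_vertices_segment_point:
  fixes V :: "'a::euclidean_space set"
  assumes "cap_body_vertices V" "v \<in> V" "w \<in> V" "v \<noteq> w"
  obtains t where "0 < t" "t < 1" "(1 - t) *\<^sub>R v + t *\<^sub>R w \<in> cball 0 1"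
proof -
  obtain q where q: "q \<in> closed_segment v w" "q \<in> cball 0 1"
    using assms unfolding cap_body_vertices_def by blast
  then obtain t where t: "0 \<le> t" "t \<le> 1" "q = (1 - t) *\<^sub>R v + t *\<^sub>R w"
    by (auto simp: in_segment)
  have "q \<noteq> v" "q \<noteq> w"
    using q(2) assms(1-3) unfolding cap_body_vertices_def by auto
  then have "t \<noteq> 0" "t \<noteq> 1"
    using t(3) by auto
  with t have "0 < t" "t < 1"
    by auto
  with that t(3) q(2) show ?thesis
    by blast
qed

lemma convex_hull_two_vertices_ball_subset:
  fixes V :: "'a::euclidean_space set"
  assumes "cap_body_vertices V" "v \<in> V" "w \<in> V"
  shows "convex hull (insert v (insert w (cball 0 1))) \<subseteq> ball_cone v \<union> ball_cone w"
proof (cases "v = w")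
  case False
  obtain t where t: "0 < t" "t < 1" and q: "(1 - t) *\<^sub>R v + t *\<^sub>R w \<in> cball 0 1"
    using cap_body_vertices_segment_point[OF assms False] .
  define q where "q = (1 - t) *\<^sub>R v + t *\<^sub>R w"
  show ?thesis
  proof
    fix x assume "x \<in> convex hull (insert v (insert w (cball 0 1)))"
    then obtain z b where z: "x \<in> closed_segment v z" "z \<in> closed_segment w b"
      and b: "b \<in> cball 0 1"
      by (auto simp: convex_hull_insert_segments hull_same[of convex, OF convex_cball])
    have "z \<in> convex hull {v, w, b}"
      using z(2) hull_mono[of "{w, b}" "{v, w, b}"] by (auto simp: segment_convex_hull)
    then have "x \<in> convex hull {v, w, b}"
      using z(1) closed_segment_subset[OF hull_inc _ convex_convex_hull] by blast
    then have "x \<in> convex hull {v, q, b} \<union> convex hull {q, w, b}"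
      using convex_hull_3_subset_cevian_split[OF q_def t] by blast
    moreover have "convex hull {v, q, b} \<subseteq> ball_cone v" "convex hull {q, w, b} \<subseteq> ball_cone w"
      using q b unfolding q_def by (simp_all add: hull_mono)
    ultimately show "x \<in> ball_cone v \<union> ball_cone w"
      by blast
  qed
qed simp

lemma convex_ball_cones:
  fixes V :: "'a::euclidean_space set"
  assumes "cap_body_vertices V"
  shows "convex (cball 0 1 \<union> (\<Union>v\<in>V. ball_cone v))" (is "convex ?C")
proof (rule convex_contains_segment[THEN iffD2], intro ballI)
  fix x y assume x: "x \<in> ?C" and y: "y \<in> ?C"
  show "closed_segment x y \<subseteq> ?C"
  proof (cases "x \<in> cball 0 1 \<and> y \<in> cball 0 1")
    case True
    then show ?thesis
      using closed_segment_subset[OF _ _ convex_cball] by blast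
  next
    case False
    have cball_sub: "cball 0 1 \<subseteq> ball_cone v" for v :: 'a
      by (auto intro: hull_inc)
    from False x y obtain v0 where "v0 \<in> V"
      by auto
    have "\<exists>v\<in>V. z \<in> ball_cone v" if "z \<in> ?C" for z
      using that \<open>v0 \<in> V\<close> cball_sub by blast
    then obtain v w where vw: "v \<in> V" "w \<in> V" "x \<in> ball_cone v" "y \<in> ball_cone w"
      using x y by blast
    let ?H = "convex hull (insert v (insert w (cball 0 1)))"
    have "x \<in> ?H" "y \<in> ?H"
      using vw(3,4) hull_mono[of "insert v (cball 0 1)" "insert v (insert w (cball 0 1))"]
        hull_mono[of "insert w (cball 0 1)" "insert v (insert w (cball 0 1))"] by auto
    then have "closed_segment x y \<subseteq> ?H"
      by (intro closed_segment_subset convex_convex_hull)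
    also have "\<dots> \<subseteq> ?C"
      using convex_hull_two_vertices_ball_subset[OF assms vw(1,2)] vw(1,2) by blast
    finally show ?thesis .
  qed
qed

lemma cap_body_subset_ball_cones:
  fixes V :: "'a::euclidean_space set"
  assumes "cap_body_vertices V"
  shows "convex hull (sphere 0 1 \<union> V) \<subseteq> cball 0 1 \<union> (\<Union>v\<in>V. ball_cone v)"
  by (intro hull_minimal convex_ball_cones[OF assms]) (auto intro: hull_inc)

lemma cball_subset_cap_body: "cball 0 1 \<subseteq> convex hull (sphere (0::'a::euclidean_space) 1 \<union> V)"
proof -
  have "cball (0::'a) 1 = convex hull (sphere 0 1)"
    using Krein_Milman_frontier[OF convex_cball compact_cball] by simp
  also have "\<dots> \<subseteq> convex hull (sphere 0 1 \<union> V)"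
    by (rule hull_mono) auto
  finally show ?thesis .
qed

lemma ball_subset_interior_cap_body:
  "ball 0 1 \<subseteq> interior (convex hull (sphere (0::'a::euclidean_space) 1 \<union> V))"
  using cball_subset_cap_body by (meson ball_subset_cball interior_maximal open_ball order_trans)

text \<open>If \<open>s = 1 + sgn v \<bullet> sgn w \<ge> 1/2\<close>, then \<open>sgn v + sgn w\<close> has inner product more than
  \<open>2 s = norm (sgn v + sgn w)\<^sup>2\<close> with every point of the segment, which contradicts
  Cauchy-Schwarz at a point of the unit ball.\<close>
lemma sgn_inner_sgn_less_if_segment_meets_cball:
  fixes v w q :: "'a::real_inner"
  assumes "q \<in> closed_segment v w" "norm q \<le> 1" "2 < norm v" "2 < norm w"
  shows "sgn v \<bullet> sgn w < - 1 / 2"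
proof (rule ccontr)
  define a b where "a = sgn v" and "b = sgn w"
  define s where "s = 1 + a \<bullet> b"
  assume "\<not> ?thesis"
  then have s: "1 / 2 \<le> s"
    by (simp add: s_def a_def b_def)
  obtain t where t: "0 \<le> t" "t \<le> 1" "q = (1 - t) *\<^sub>R v + t *\<^sub>R w"
    using assms(1) by (auto simp: in_segment)
  have "v \<noteq> 0" "w \<noteq> 0"
    using assms(3,4) by auto
  then have aa: "a \<bullet> a = 1" and bb: "b \<bullet> b = 1"
    by (simp_all add: a_def b_def dot_square_norm norm_sgn)
  have ab: "(a + b) \<bullet> a = s" "(a + b) \<bullet> b = s"
    using aa bb by (simp_all add: s_def inner_add_left inner_add_right inner_commute)
  have "q = ((1 - t) * norm v) *\<^sub>R a + (t * norm w) *\<^sub>R b"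
    using \<open>v \<noteq> 0\<close> \<open>w \<noteq> 0\<close> by (simp add: t(3) a_def b_def sgn_div_norm mult.assoc)
  then have "(a + b) \<bullet> q = ((1 - t) * norm v + t * norm w) * s"
    by (simp only: inner_add_right inner_scaleR_right ab) (simp add: algebra_simps)
  moreover have "2 < (1 - t) * norm v + t * norm w"
  proof (cases "t = 0")
    case False
    then have "t * 2 < t * norm w" "(1 - t) * 2 \<le> (1 - t) * norm v"
      using t(1,2) assms(3,4) by (simp, intro mult_left_mono) auto
    then show ?thesis
      by (simp add: algebra_simps)
  qed (use assms(3) in simp)
  ultimately have "2 * s < (a + b) \<bullet> q"
    using s by simp
  also have "\<dots> \<le> norm (a + b) * norm q"
    by (rule norm_cauchy_schwarz)
  also have "\<dots> \<le> norm (a + b)"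
    using assms(2) by (simp add: mult_left_le)
  finally have "(norm (a + b))\<^sup>2 < norm (a + b)"
    by (simp add: power2_norm_eq_inner inner_add_left inner_add_right aa bb inner_commute s_def)
  then have "(norm (a + b))\<^sup>2 < 1"
    by (smt (verit) norm_ge_zero power2_eq_square mult_le_cancel_left1)
  then show False
    using s by (simp add: power2_norm_eq_inner inner_add_left inner_add_right aa bb inner_commute
        s_def)
qed

lemma bounded_cap_body_vertices:
  fixes V :: "'a::euclidean_space set"
  assumes "cap_body_vertices V"
  shows "bounded V"
proof -
  define W where "W = {v \<in> V. 2 < norm v}"
  have obtuse: "sgn v \<bullet> sgn w < - 1 / 2" if "v \<in> W" "w \<in> W" "v \<noteq> w" for v w
  proof -
    have "closed_segment v w \<inter> cball 0 1 \<noteq> {}"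
      using assms that unfolding cap_body_vertices_def W_def by blast
    then obtain q where "q \<in> closed_segment v w" "norm q \<le> 1"
      by auto
    then show ?thesis
      using that sgn_inner_sgn_less_if_segment_meets_cball unfolding W_def by blast
  qed
  have "finite W"
  proof (rule ccontr)
    assume "infinite W"
    then obtain B where "card B = 3" "B \<subseteq> W"
      using infinite_arbitrarily_large by blast
    then obtain x y z where xyz: "x \<in> W" "y \<in> W" "z \<in> W" "x \<noteq> y" "y \<noteq> z" "x \<noteq> z"
      by (auto simp: card_3_iff)
    then have "sgn x \<bullet> sgn x = 1" "sgn y \<bullet> sgn y = 1" "sgn z \<bullet> sgn z = 1"
      unfolding W_def by (auto simp: dot_square_norm norm_sgn)
    moreover have "0 \<le> (sgn x + sgn y + sgn z) \<bullet> (sgn x + sgn y + sgn z)"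
      by simp
    ultimately show False
      using obtuse[of x y] obtuse[of y z] obtuse[of x z] xyz
      by (simp add: inner_add_left inner_add_right inner_commute)
  qed
  then have "bounded (cball 0 2 \<union> W)"
    by (simp add: finite_imp_bounded)
  moreover have "V \<subseteq> cball 0 2 \<union> W"
    unfolding W_def by auto
  ultimately show ?thesis
    using bounded_subset by blast
qed

lemma cap_body_vertices_eq_if_in_convex_disjoint:
  fixes V :: "'a::euclidean_space set"
  assumes "cap_body_vertices V" "convex S" "S \<inter> cball 0 1 = {}" "v \<in> V \<inter> S" "w \<in> V \<inter> S"
  shows "v = w"
  using assms closed_segment_subset[of v S w] unfolding cap_body_vertices_def by blast

lemma closed_sphere_Un_cap_body_vertices:
  fixes V :: "'a::euclidean_space set"
  assumes "cap_body_vertices V"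
  shows "closed (sphere 0 1 \<union> V)"
  unfolding closed_limpt
proof (intro allI impI)
  fix x assume "x islimpt sphere 0 1 \<union> V"
  then consider "x islimpt sphere 0 1" | "x islimpt V"
    by (auto simp: islimpt_Un)
  then show "x \<in> sphere 0 1 \<union> V"
  proof cases
    case 1
    then show ?thesis
      using closed_sphere closed_limpt by blast
  next
    case 2
    have "V \<subseteq> - ball 0 1"
      using assms unfolding cap_body_vertices_def by auto
    then have "x \<in> - ball 0 1"
      using islimpt_subset[OF 2] closed_limpt[of "- ball 0 1"] by blast
    moreover have "\<not> 1 < norm x"
    proof
      assume "1 < norm x"
      define e where "e = norm x - 1"
      have "1 < norm y" if "y \<in> ball x e" for y
        using that norm_triangle_sub[of x y] by (simp add: e_def dist_norm)
      then have "ball x e \<inter> cball 0 1 = {}"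
        by force
      then have "\<exists>v. V \<inter> ball x e \<subseteq> {v}"
        using cap_body_vertices_eq_if_in_convex_disjoint[OF assms convex_ball] by blast
      then have "finite (V \<inter> ball x e)"
        using finite_subset by blast
      moreover have "0 < e"
        using \<open>1 < norm x\<close> by (simp add: e_def)
      ultimately show False
        using 2 by (auto simp: islimpt_eq_infinite_ball)
    qed
    ultimately show ?thesis
      by simp
  qed
qed

lemma closed_cap_body:
  fixes V :: "'a::euclidean_space set"
  assumes "cap_body_vertices V"
  shows "closed (convex hull (sphere 0 1 \<union> V))"
  using closed_sphere_Un_cap_body_vertices[OF assms] bounded_cap_body_vertices[OF assms]
  by (intro compact_imp_closed compact_convex_hull) (simp add: compact_eq_bounded_closed)

lemma cap_body_subset_halfspace:
  fixes V :: "'a::euclidean_space set"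
  assumes "norm c \<le> 1" "1 \<le> b" "\<forall>w\<in>V. c \<bullet> w \<le> b"
  shows "convex hull (sphere 0 1 \<union> V) \<subseteq> {y. c \<bullet> y \<le> b}"
proof (intro hull_minimal convex_halfspace_le)
  have "c \<bullet> y \<le> b" if "y \<in> sphere 0 1" for y
    using norm_cauchy_schwarz[of c y] that assms(1,2) by simp
  then show "sphere 0 1 \<union> V \<subseteq> {y. c \<bullet> y \<le> b}"
    using assms(3) by auto
qed

lemma cap_body_vertices_inner_le:
  fixes V :: "'a::euclidean_space set"
  assumes "cap_body_vertices V" "v \<in> V" "w \<in> V" "norm c \<le> 1" "1 \<le> c \<bullet> v"
  shows "c \<bullet> w \<le> c \<bullet> v"
proof (rule ccontr)
  assume "\<not> ?thesis"
  then have vw: "c \<bullet> v < c \<bullet> w" "v \<noteq> w"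
    by auto
  obtain t where t: "0 < t" "t < 1" and q: "(1 - t) *\<^sub>R v + t *\<^sub>R w \<in> cball 0 1"
    using cap_body_vertices_segment_point[OF assms(1-3) vw(2)] .
  have "c \<bullet> v = (1 - t) * (c \<bullet> v) + t * (c \<bullet> v)"
    by (simp add: algebra_simps)
  also have "\<dots> < c \<bullet> ((1 - t) *\<^sub>R v + t *\<^sub>R w)"
    using t vw(1) by (simp add: inner_add_right)
  also have "\<dots> \<le> norm c * norm ((1 - t) *\<^sub>R v + t *\<^sub>R w)"
    by (rule norm_cauchy_schwarz)
  also have "\<dots> \<le> 1"
    using q assms(4) by (simp add: mult_le_one)
  finally show False
    using assms(5) by simp
qed

lemma cap_body_subset_halfspace_at_vertex:
  fixes V :: "'a::euclidean_space set"
  assumes "cap_body_vertices V" "v \<in> V" "norm c \<le> 1" "1 \<le> c \<bullet> v"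
  shows "convex hull (sphere 0 1 \<union> V) \<subseteq> {y. c \<bullet> y \<le> c \<bullet> v}"
  using assms cap_body_subset_halfspace cap_body_vertices_inner_le by blast

lemma interior_subset_open_halfspace:
  fixes K :: "'a::euclidean_space set"
  assumes "K \<subseteq> {y. c \<bullet> y \<le> b}" "c \<noteq> 0"
  shows "interior K \<subseteq> {y. c \<bullet> y < b}"
  using interior_mono[OF assms(1)] assms(2) by simp

lemma frontier_if_supporting_halfspace:
  fixes K :: "'a::euclidean_space set"
  assumes "p \<in> K" "K \<subseteq> {y. c \<bullet> y \<le> c \<bullet> p}" "c \<noteq> 0"
  shows "p \<in> frontier K"
  using assms interior_subset_open_halfspace[OF assms(2,3)] closure_subset
  unfolding frontier_def by blast

lemma illuminates_imp_inner_neg: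
  fixes K :: "'a::euclidean_space set"
  assumes "illuminates K u p" "K \<subseteq> {y. c \<bullet> y \<le> c \<bullet> p}" "c \<noteq> 0"
  shows "c \<bullet> u < 0"
proof -
  obtain t where "0 < t" "p + t *\<^sub>R u \<in> interior K"
    using assms(1) unfolding illuminates_def by blast
  then have "0 < t" "c \<bullet> (p + t *\<^sub>R u) < c \<bullet> p"
    using interior_subset_open_halfspace[OF assms(2,3)] by auto
  then show ?thesis
    by (simp add: inner_add_right mult_less_0_iff)
qed

lemma illuminated_cap_body_vertex:
  fixes V :: "'a::euclidean_space set"
  assumes cb: "cap_body_vertices V" and "v \<in> V"
    and ill: "completely_illuminated (convex hull (sphere 0 1 \<union> V)) U"
  shows "\<exists>u\<in>U. spherical_cap v \<subseteq> Hem (- u)"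
proof -
  let ?K = "convex hull (sphere 0 1 \<union> V)"
  have support: "?K \<subseteq> {y. c \<bullet> y \<le> c \<bullet> v}" "c \<noteq> 0" if "c \<in> spherical_cap v" for c
    using that cap_body_subset_halfspace_at_vertex[OF cb \<open>v \<in> V\<close>]
    by (auto simp: spherical_cap_def)
  have "1 \<le> norm v"
    using cb \<open>v \<in> V\<close> unfolding cap_body_vertices_def by auto
  then have "v \<in> frontier ?K"
    using support[OF sgn_mem_spherical_cap] \<open>v \<in> V\<close>
    by (intro frontier_if_supporting_halfspace) (auto intro: hull_inc)
  then obtain u where "u \<in> U" "illuminates ?K u v"
    using ill unfolding completely_illuminated_def by blast
  moreover have "c \<in> Hem (- u)" if "c \<in> spherical_cap v" for c
    using illuminates_imp_inner_neg[OF \<open>illuminates ?K u v\<close> support[OF that]] that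
    by (auto simp: Hem_def spherical_cap_def)
  ultimately show ?thesis
    by blast
qed

lemma illuminated_cap_body_sphere:
  fixes V :: "'a::euclidean_space set"
  assumes cb: "cap_body_vertices V"
    and ill: "completely_illuminated (convex hull (sphere 0 1 \<union> V)) U"
  shows "sphere 0 1 \<subseteq> (\<Union>u\<in>U. Hem (- u))"
proof
  let ?K = "convex hull (sphere 0 1 \<union> V)"
  fix x :: 'a assume x: "x \<in> sphere 0 1"
  show "x \<in> (\<Union>u\<in>U. Hem (- u))"
  proof (cases "\<exists>v\<in>V. 1 \<le> x \<bullet> v")
    case True
    then obtain v where "v \<in> V" "x \<in> spherical_cap v"
      using x unfolding spherical_cap_def by blast
    then show ?thesis
      using illuminated_cap_body_vertex[OF cb _ ill] by blast
  next
    case False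
    have xx: "x \<bullet> x = 1"
      using x by (simp add: dot_square_norm)
    have support: "?K \<subseteq> {y. x \<bullet> y \<le> x \<bullet> x}"
      using False x xx by (intro cap_body_subset_halfspace) auto
    moreover have "x \<noteq> 0"
      using x by auto
    ultimately have "x \<in> frontier ?K"
      using x by (intro frontier_if_supporting_halfspace) (auto intro: hull_inc)
    then obtain u where "u \<in> U" "illuminates ?K u x"
      using ill unfolding completely_illuminated_def by blast
    then have "x \<in> Hem (- u)"
      using illuminates_imp_inner_neg[OF _ support \<open>x \<noteq> 0\<close>] x by (auto simp: Hem_def)
    then show ?thesis
      using \<open>u \<in> U\<close> by blast
  qed
qed

lemma cap_body_completely_illuminated:
  fixes V :: "'a::euclidean_space set"
  assumes cb: "cap_body_vertices V" and unit: "\<forall>u\<in>U. norm u = 1"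
    and caps: "\<forall>v\<in>V. \<exists>u\<in>U. spherical_cap v \<subseteq> Hem (- u)"
    and sphere: "sphere 0 1 \<subseteq> (\<Union>u\<in>U. Hem (- u))"
  shows "completely_illuminated (convex hull (sphere 0 1 \<union> V)) U"
  unfolding completely_illuminated_def
proof
  let ?K = "convex hull (sphere 0 1 \<union> V)"
  fix p assume p: "p \<in> frontier ?K"
  then have "p \<in> ?K"
    using closed_cap_body[OF cb] frontier_subset_closed by blast
  have "p \<notin> ball 0 1"
    using p ball_subset_interior_cap_body unfolding frontier_def by blast
  have "\<exists>u\<in>U. \<exists>t>0. p + t *\<^sub>R u \<in> ball 0 1"
  proof (cases "p \<in> cball 0 1")
    case True
    with \<open>p \<notin> ball 0 1\<close> have "norm p = 1"
      by simp
    then obtain u where "u \<in> U" "u \<bullet> p < 0"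
      using sphere by (auto simp: Hem_def inner_commute)
    moreover have "(norm p)\<^sup>2 - (u \<bullet> p)\<^sup>2 < 1"
      using \<open>norm p = 1\<close> \<open>u \<bullet> p < 0\<close> by simp
    ultimately show ?thesis
      using exists_add_scaleR_in_ball unit by blast
  next
    case False
    then obtain v where "v \<in> V" "p \<in> ball_cone v"
      using cap_body_subset_ball_cones[OF cb] \<open>p \<in> ?K\<close> by blast
    moreover obtain u where "u \<in> U" "spherical_cap v \<subseteq> Hem (- u)"
      using caps \<open>v \<in> V\<close> by blast
    moreover have "1 \<le> norm v"
      using cb \<open>v \<in> V\<close> unfolding cap_body_vertices_def by auto
    ultimately show ?thesis
      using False unit exists_add_scaleR_in_ball_if_spherical_cap_subset ball_cone_enters_ball
      by metis
  qed
  then show "\<exists>u\<in>U. illuminates ?K u p"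
    unfolding illuminates_def using ball_subset_interior_cap_body by blast
qed

theorem theorem1:
  fixes V :: "'a::euclidean_space set" and u :: "nat \<Rightarrow> 'a" and k :: nat
  assumes "DIM('a) \<ge> 2"
    and "cap_body_vertices V"
    and "\<And>j. j \<in> {1..k} \<Longrightarrow> u j \<in> sphere 0 1"
  shows "completely_illuminated (convex hull (sphere 0 1 \<union> V)) (u ` {1..k}) \<longleftrightarrow>
     ((\<forall>v \<in> V. \<exists>j \<in> {1..k}. spherical_cap v \<subseteq> Hem (- u j)) \<and>
      (\<Union>j \<in> {1..k}. Hem (- u j)) = sphere 0 1)"
proof -
  \<comment> \<open>The argument works in every dimension.\<close>
  have unit: "\<forall>w \<in> u ` {1..k}. norm w = 1"
    using assms(3) by auto
  have caps: "(\<forall>v \<in> V. \<exists>j \<in> {1..k}. spherical_cap v \<subseteq> Hem (- u j)) \<longleftrightarrow>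
      (\<forall>v \<in> V. \<exists>w \<in> u ` {1..k}. spherical_cap v \<subseteq> Hem (- w))"
    by blast
  have sphere: "(\<Union>j \<in> {1..k}. Hem (- u j)) = sphere 0 1 \<longleftrightarrow>
      sphere 0 1 \<subseteq> (\<Union>w \<in> u ` {1..k}. Hem (- w))"
    by (auto simp: Hem_def)
  show ?thesis
    unfolding caps sphere
  proof
    assume ill: "completely_illuminated (convex hull (sphere 0 1 \<union> V)) (u ` {1..k})"
    show "(\<forall>v \<in> V. \<exists>w \<in> u ` {1..k}. spherical_cap v \<subseteq> Hem (- w)) \<and>
        sphere 0 1 \<subseteq> (\<Union>w \<in> u ` {1..k}. Hem (- w))"
      using illuminated_cap_body_vertex[OF assms(2) _ ill] illuminated_cap_body_sphere[OF assms(2) ill]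
      by blast
  qed (use cap_body_completely_illuminated[OF assms(2) unit] in blast)
qed

end
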